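(* Let $\mathbb{K}$ be a field of characteristic zero, $\mathbb{F}$ an algebraic closure of $\mathbb{K}$, $\alpha\in\mathbb{F}$ algebraic of degree $n$ over $\mathbb{K}$, and let $\psi\in\mathbb{K}(\alpha)(t)^m$ be a proper parametrization of a rational curve $\mathcal{C}\subseteq\mathbb{F}^m$. Assume that $\mathcal{C}$ is defined over $\mathbb{K}$. Let $\alpha_i\ne\alpha_j$ be two conjugates of $\alpha$ over $\mathbb{K}$, and suppose that $\alpha_i,\alpha_j$ are also conjugate over $\mathbb{K}(\alpha)$, with $\tau$ a $\mathbb{K}(\alpha)$-automorphism of $\mathbb{F}$ such that $\tau(\alpha_i)=\alpha_j$. Then $\tau(u_i)=u_j$, where $\tau$ is applied to the coefficients of $u_i$.
   Context: For a conjugate $\alpha_k$ of $\alpha$, let $\sigma_k$ be a $\mathbb{K}$-automorphism of $\mathbb{F}$ with $\sigma_k(\alpha)=\alpha_k$; $\psi^{\sigma_k}$ denotes $\psi$ with $\sigma_k$ applied to its coefficients. Definition of $u_k$: substitute $t=\sum_{l=0}^{n-1}\alpha^lt_l$ and write $\psi_r(\sum_l\alpha^lt_l)=\sum_{l=0}^{n-1}\alpha^lF_{lr}/D$ with $F_{lr},D\in\mathbb{K}[t_0,\dots,t_{n-1}]$; since $\mathcal{C}$ is defined over $\mathbb{K}$, the Zariski closure of $\{F_{lr}=0,\ 1\le l\le n-1,\ 1\le r\le m\}\setminus\{D=0\}$ in $\mathbb{F}^n$ has a unique one-dimensional component $\mathcal{U}$ (the hypercircle), with standard parametrization $\phi=(\phi_0,\dots,\phi_{n-1})\in\mathbb{K}(\alpha)(t)^n$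 satisfying $\sum_l\alpha^l\phi_l(t)=t$. Then $u_k(t)=\sum_l\alpha_k^l\phi_l(t)$; it is a fractional linear transformation with coefficients in $\mathbb{K}(\alpha,\alpha_k)$ satisfying $\psi(t)=\psi^{\sigma_k}(u_k(t))$. *)

theory Defs
  imports "HOL-Computational_Algebra.Polynomial" "HOL-Computational_Algebra.Fraction_Field"
begin

text \<open>The ambient field F is the whole type 'a.  K is a subfield given as a set.\<close>

definition is_subfield :: "'a::field set \<Rightarrow> bool" where
  "is_subfield L \<longleftrightarrow> 0 \<in> L \<and> 1 \<in> L \<and>
     (\<forall>x\<in>L. \<forall>y\<in>L. x + y \<in> L \<and> x * y \<in> L) \<and>
     (\<forall>x\<in>L. - x \<in> L \<and> inverse x \<in> L)"

definition alg_closed_type :: "'a::field itself \<Rightarrow> bool" where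
  "alg_closed_type _ \<longleftrightarrow> (\<forall>p::'a poly. degree p > 0 \<longrightarrow> (\<exists>x. poly p x = 0))"

definition algebraic_over :: "'a::field set \<Rightarrow> 'a \<Rightarrow> bool" where
  "algebraic_over K x \<longleftrightarrow> (\<exists>p. p \<noteq> 0 \<and> set (coeffs p) \<subseteq> K \<and> poly p x = 0)"

definition is_alg_closure_of :: "'a::field set \<Rightarrow> bool" where
  "is_alg_closure_of K \<longleftrightarrow> alg_closed_type TYPE('a) \<and> (\<forall>x. algebraic_over K x)"

definition deg_over :: "'a::field set \<Rightarrow> 'a \<Rightarrow> nat" where
  "deg_over K x = (LEAST d. \<exists>p. p \<noteq> 0 \<and> set (coeffs p) \<subseteq> K \<and> degree p = d \<and> poly p x = 0)"

definition adjoin :: "'a::field set \<Rightarrow> 'a \<Rightarrow> 'a set" where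
  "adjoin K a = \<Inter>{L. is_subfield L \<and> K \<subseteq> L \<and> a \<in> L}"

definition field_aut_over :: "'a::field set \<Rightarrow> ('a \<Rightarrow> 'a) \<Rightarrow> bool" where
  "field_aut_over L \<sigma> \<longleftrightarrow> bij \<sigma> \<and> (\<forall>x y. \<sigma> (x + y) = \<sigma> x + \<sigma> y \<and> \<sigma> (x * y) = \<sigma> x * \<sigma> y)
      \<and> (\<forall>x\<in>L. \<sigma> x = x)"

definition conjugate_over :: "'a::field set \<Rightarrow> 'a \<Rightarrow> 'a \<Rightarrow> bool" where
  "conjugate_over L a b \<longleftrightarrow> (\<exists>\<sigma>. field_aut_over L \<sigma> \<and> \<sigma> a = b)"

text \<open>Affine space F^n: points are functions nat => 'a vanishing from index n on.\<close>
definition aspace :: "nat \<Rightarrow> (nat \<Rightarrow> 'a::zero) set" where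
  "aspace n = {x. \<forall>i\<ge>n. x i = 0}"

text \<open>Polynomial functions in the variables t_0..t_(n-1) with coefficients in L
  (F is infinite, so these are the same as polynomials in L[t_0,...,t_(n-1)]).\<close>
inductive polyfun :: "'a::field set \<Rightarrow> nat \<Rightarrow> ((nat \<Rightarrow> 'a) \<Rightarrow> 'a) \<Rightarrow> bool"
  for L n where
  const: "c \<in> L \<Longrightarrow> polyfun L n (\<lambda>x. c)"
| var: "i < n \<Longrightarrow> polyfun L n (\<lambda>x. x i)"
| add: "polyfun L n f \<Longrightarrow> polyfun L n g \<Longrightarrow> polyfun L n (\<lambda>x. f x + g x)"
| mult: "polyfun L n f \<Longrightarrow> polyfun L n g \<Longrightarrow> polyfun L n (\<lambda>x. f x * g x)"

definition zclos :: "nat \<Rightarrow> (nat \<Rightarrow> 'a::field) set \<Rightarrow> (nat \<Rightarrow> 'a) set" where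
  "zclos n S = {x \<in> aspace n. \<forall>f. polyfun UNIV n f \<and> (\<forall>y\<in>S. f y = 0) \<longrightarrow> f x = 0}"

definition zclosed :: "nat \<Rightarrow> (nat \<Rightarrow> 'a::field) set \<Rightarrow> bool" where
  "zclosed n Z \<longleftrightarrow> Z \<subseteq> aspace n \<and> zclos n Z = Z"

definition zirreducible :: "nat \<Rightarrow> (nat \<Rightarrow> 'a::field) set \<Rightarrow> bool" where
  "zirreducible n Z \<longleftrightarrow> Z \<noteq> {} \<and> zclosed n Z \<and>
     (\<forall>A B. zclosed n A \<longrightarrow> zclosed n B \<longrightarrow> Z = A \<union> B \<longrightarrow> Z = A \<or> Z = B)"

definition zcomponent :: "nat \<Rightarrow> (nat \<Rightarrow> 'a::field) set \<Rightarrow> (nat \<Rightarrow> 'a) set \<Rightarrow> bool" where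
  "zcomponent n Z W \<longleftrightarrow> zirreducible n Z \<and> Z \<subseteq> W \<and>
     (\<forall>Z'. zirreducible n Z' \<longrightarrow> Z \<subseteq> Z' \<longrightarrow> Z' \<subseteq> W \<longrightarrow> Z' = Z)"

text \<open>A vector of m univariate rational functions given as (numerator, denominator) pairs,
  indexed by r < m.\<close>
definition rdefined :: "nat \<Rightarrow> (nat \<Rightarrow> 'a::field poly \<times> 'a poly) \<Rightarrow> 'a \<Rightarrow> bool" where
  "rdefined m \<psi> t \<longleftrightarrow> (\<forall>r<m. poly (snd (\<psi> r)) t \<noteq> 0)"

definition reval :: "nat \<Rightarrow> (nat \<Rightarrow> 'a::field poly \<times> 'a poly) \<Rightarrow> 'a \<Rightarrow> (nat \<Rightarrow> 'a)" where
  "reval m \<psi> t = (\<lambda>r. if r < m then poly (fst (\<psi> r)) t / poly (snd (\<psi> r)) t else 0)"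

definition rimage :: "nat \<Rightarrow> (nat \<Rightarrow> 'a::field poly \<times> 'a poly) \<Rightarrow> (nat \<Rightarrow> 'a) set" where
  "rimage m \<psi> = reval m \<psi> ` {t. rdefined m \<psi> t}"

definition rvec_over :: "'a::field set \<Rightarrow> nat \<Rightarrow> (nat \<Rightarrow> 'a poly \<times> 'a poly) \<Rightarrow> bool" where
  "rvec_over L m \<psi> \<longleftrightarrow> (\<forall>r<m. snd (\<psi> r) \<noteq> 0 \<and> set (coeffs (fst (\<psi> r))) \<subseteq> L
        \<and> set (coeffs (snd (\<psi> r))) \<subseteq> L)"

text \<open>Proper (birational onto its image): the generic fibre has exactly one point.\<close>
definition proper_param :: "nat \<Rightarrow> (nat \<Rightarrow> 'a::field poly \<times> 'a poly) \<Rightarrow> bool" where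
  "proper_param m \<psi> \<longleftrightarrow> finite {t0. rdefined m \<psi> t0 \<and>
      (\<exists>t. rdefined m \<psi> t \<and> t \<noteq> t0 \<and> reval m \<psi> t = reval m \<psi> t0)}"

definition defined_over :: "'a::field set \<Rightarrow> nat \<Rightarrow> (nat \<Rightarrow> 'a) set \<Rightarrow> bool" where
  "defined_over K m C \<longleftrightarrow> (\<exists>S. (\<forall>f\<in>S. polyfun K m f) \<and> C = {x \<in> aspace m. \<forall>f\<in>S. f x = 0})"

definition rat_of :: "'a::field poly \<times> 'a poly \<Rightarrow> 'a poly fract" where
  "rat_of pq = Fract (fst pq) (snd pq)"

definition map_ratfun :: "('a::field \<Rightarrow> 'a) \<Rightarrow> 'a poly fract \<Rightarrow> 'a poly fract" where
  "map_ratfun \<tau> f = (SOME g. \<exists>p q. q \<noteq> 0 \<and> f = Fract p q \<and> g = Fract (map_poly \<tau> p) (map_poly \<tau> q))"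

text \<open>u_k(t) = sum_(l<n) beta^l phi_l(t), where beta = alpha_k.\<close>
definition u_fun :: "'a::field \<Rightarrow> nat \<Rightarrow> (nat \<Rightarrow> 'a poly \<times> 'a poly) \<Rightarrow> 'a poly fract" where
  "u_fun \<beta> n \<phi> = (\<Sum>l<n. Fract [:\<beta> ^ l:] 1 * rat_of (\<phi> l))"

definition hyper_open :: "nat \<Rightarrow> nat \<Rightarrow> (nat \<Rightarrow> nat \<Rightarrow> (nat \<Rightarrow> 'a::field) \<Rightarrow> 'a)
     \<Rightarrow> ((nat \<Rightarrow> 'a) \<Rightarrow> 'a) \<Rightarrow> (nat \<Rightarrow> 'a) set" where
  "hyper_open n m Fs D = {x \<in> aspace n. (\<forall>l\<in>{1..<n}. \<forall>r<m. Fs l r x = 0) \<and> D x \<noteq> 0}"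

end

theory Submission
  imports Defs
begin

text \<open>Since \<tau> fixes \<open>K(\<alpha>)\<close>, it fixes the coefficients of the standard parametrization \<open>\<phi>\<close>;
  applying \<tau> to the coefficients of \<open>u\<^sub>i = \<Sum>\<^sub>l \<alpha>\<^sub>i\<^sup>l \<phi>\<^sub>l\<close> therefore only replaces
  \<open>\<alpha>\<^sub>i\<^sup>l\<close> by \<open>\<tau>(\<alpha>\<^sub>i)\<^sup>l = \<alpha>\<^sub>j\<^sup>l\<close>, which gives \<open>u\<^sub>j\<close>.  The work lies in checking that
  the choice-based coefficient action on rational functions is well defined and is a ring
  homomorphism.\<close>

locale field_hom =
  fixes \<tau> :: "'a::field \<Rightarrow> 'a"
  assumes hom_add: "\<tau> (x + y) = \<tau> x + \<tau> y"
    and hom_mult: "\<tau> (x * y) = \<tau> x * \<tau> y"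
    and hom_1: "\<tau> 1 = 1"
begin

lemma hom_0: "\<tau> 0 = 0"
  using hom_add[of 0 0] by (metis add.right_neutral add_left_cancel)

lemma hom_sum: "\<tau> (\<Sum>i\<in>A. f i) = (\<Sum>i\<in>A. \<tau> (f i))"
  by (induction A rule: infinite_finite_induct) (auto simp: hom_0 hom_add)

lemma hom_power: "\<tau> (x ^ k) = \<tau> x ^ k"
  by (induction k) (auto simp: hom_1 hom_mult)

lemma hom_eq_0_iff: "\<tau> x = 0 \<longleftrightarrow> x = 0"
proof
  assume "\<tau> x = 0"
  moreover have "\<tau> x * \<tau> (inverse x) = 1" if "x \<noteq> 0"
    using that by (simp flip: hom_mult add: hom_1)
  ultimately show "x = 0" by force
qed (simp add: hom_0)

lemma coeff_map_poly_hom: "coeff (map_poly \<tau> p) k = \<tau> (coeff p k)"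
  by (simp add: coeff_map_poly hom_0)

lemma map_poly_add: "map_poly \<tau> (p + q) = map_poly \<tau> p + map_poly \<tau> q"
  by (rule poly_eqI) (simp add: coeff_map_poly_hom hom_add)

lemma map_poly_mult: "map_poly \<tau> (p * q) = map_poly \<tau> p * map_poly \<tau> q"
  by (rule poly_eqI) (simp add: coeff_map_poly_hom coeff_mult hom_sum hom_mult)

lemma map_poly_hom_eq_0_iff: "map_poly \<tau> p = 0 \<longleftrightarrow> p = 0"
  by (rule map_poly_eq_0_iff) (simp_all add: hom_0 hom_eq_0_iff)

lemma map_poly_const: "map_poly \<tau> [:c:] = [:\<tau> c:]"
  by (simp add: map_poly_pCons hom_0)

lemma map_ratfun_Fract:
  assumes "q \<noteq> 0"
  shows "map_ratfun \<tau> (Fract p q) = Fract (map_poly \<tau> p) (map_poly \<tau> q)"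
  unfolding map_ratfun_def
proof (rule someI2)
  show "\<exists>p' q'. q' \<noteq> 0 \<and> Fract p q = Fract p' q' \<and>
      Fract (map_poly \<tau> p) (map_poly \<tau> q) = Fract (map_poly \<tau> p') (map_poly \<tau> q')"
    using assms by blast
next
  fix g
  assume "\<exists>p' q'. q' \<noteq> 0 \<and> Fract p q = Fract p' q' \<and> g = Fract (map_poly \<tau> p') (map_poly \<tau> q')"
  then obtain p' q' where q': "q' \<noteq> 0" and eq: "Fract p q = Fract p' q'"
    and g: "g = Fract (map_poly \<tau> p') (map_poly \<tau> q')" by blast
  have "p * q' = p' * q"
    using eq assms q' by (simp add: eq_fract)
  then have "map_poly \<tau> p * map_poly \<tau> q' = map_poly \<tau> p' * map_poly \<tau> q"
    by (metis map_poly_mult)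
  then show "g = Fract (map_poly \<tau> p) (map_poly \<tau> q)"
    using g assms q' by (simp add: eq_fract map_poly_hom_eq_0_iff)
qed

lemma map_ratfun_add: "map_ratfun \<tau> (f + g) = map_ratfun \<tau> f + map_ratfun \<tau> g"
proof (cases f; cases g)
  fix a b c d :: "'a poly"
  assume "f = Fract a b" "b \<noteq> 0" "g = Fract c d" "d \<noteq> 0"
  then show ?thesis
    by (simp add: map_ratfun_Fract map_poly_add map_poly_mult map_poly_hom_eq_0_iff)
qed

lemma map_ratfun_mult: "map_ratfun \<tau> (f * g) = map_ratfun \<tau> f * map_ratfun \<tau> g"
proof (cases f; cases g)
  fix a b c d :: "'a poly"
  assume "f = Fract a b" "b \<noteq> 0" "g = Fract c d" "d \<noteq> 0"
  then show ?thesis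
    by (simp add: map_ratfun_Fract map_poly_mult map_poly_hom_eq_0_iff)
qed

lemma map_ratfun_0: "map_ratfun \<tau> 0 = 0"
  by (simp add: Zero_fract_def map_ratfun_Fract eq_fract)

lemma map_ratfun_sum: "map_ratfun \<tau> (\<Sum>i\<in>A. f i) = (\<Sum>i\<in>A. map_ratfun \<tau> (f i))"
  by (induction A rule: infinite_finite_induct) (auto simp: map_ratfun_0 map_ratfun_add)

lemma map_ratfun_rat_of_fixed:
  assumes "snd pq \<noteq> 0" and "\<And>x. x \<in> set (coeffs (fst pq)) \<union> set (coeffs (snd pq)) \<Longrightarrow> \<tau> x = x"
  shows "map_ratfun \<tau> (rat_of pq) = rat_of pq"
  using assms by (simp add: rat_of_def map_ratfun_Fract map_poly_idI)

lemma map_ratfun_u_fun: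
  assumes "rvec_over L n \<phi>" and "\<And>x. x \<in> L \<Longrightarrow> \<tau> x = x"
  shows "map_ratfun \<tau> (u_fun \<beta> n \<phi>) = u_fun (\<tau> \<beta>) n \<phi>"
proof -
  have "map_ratfun \<tau> (Fract [:\<beta> ^ l:] 1 * rat_of (\<phi> l)) = Fract [:\<tau> \<beta> ^ l:] 1 * rat_of (\<phi> l)"
    if "l < n" for l
  proof -
    have "map_ratfun \<tau> (rat_of (\<phi> l)) = rat_of (\<phi> l)"
      using assms that unfolding rvec_over_def by (intro map_ratfun_rat_of_fixed) auto
    then show ?thesis
      by (simp add: map_ratfun_mult map_ratfun_Fract map_poly_const hom_power hom_1
          del: mult_fract)
  qed
  then show ?thesis
    unfolding u_fun_def map_ratfun_sum by (intro sum.cong) auto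
qed

end

lemma field_aut_over_field_hom:
  assumes "field_aut_over L \<tau>"
  shows "field_hom \<tau>"
proof
  have inj: "inj \<tau>" and mult: "\<And>x y. \<tau> (x * y) = \<tau> x * \<tau> y"
    using assms unfolding field_aut_over_def bij_def by auto
  show "\<tau> (x + y) = \<tau> x + \<tau> y" "\<tau> (x * y) = \<tau> x * \<tau> y" for x y
    using assms unfolding field_aut_over_def by auto
  have "\<tau> 0 = 0"
    using assms unfolding field_aut_over_def by (metis add.right_neutral add_left_cancel)
  then have "\<tau> 1 \<noteq> 0"
    using inj by (metis injD zero_neq_one)
  moreover have "\<tau> 1 * \<tau> 1 = \<tau> 1 * 1"
    by (simp flip: mult)
  ultimately show "\<tau> 1 = 1"
    by simp
qed

theorem proposition1:
  fixes K :: "'a::field_char_0 set"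
    and \<alpha> \<alpha>i \<alpha>j :: 'a
    and n m :: nat
    and \<psi> :: "nat \<Rightarrow> 'a poly \<times> 'a poly"
    and Fs :: "nat \<Rightarrow> nat \<Rightarrow> (nat \<Rightarrow> 'a) \<Rightarrow> 'a"
    and D :: "(nat \<Rightarrow> 'a) \<Rightarrow> 'a"
    and \<phi> :: "nat \<Rightarrow> 'a poly \<times> 'a poly"
    and \<tau> :: "'a \<Rightarrow> 'a"
  assumes K: "is_subfield K"
    and F: "is_alg_closure_of K"
    and n: "n = deg_over K \<alpha>"
    and \<psi>_coeffs: "rvec_over (adjoin K \<alpha>) m \<psi>"
    and \<psi>_proper: "proper_param m \<psi>"
    and C_over_K: "defined_over K m (zclos m (rimage m \<psi>))"
    and i_conj: "conjugate_over K \<alpha> \<alpha>i"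
    and j_conj: "conjugate_over K \<alpha> \<alpha>j"
    and ij: "\<alpha>i \<noteq> \<alpha>j"
    and \<tau>: "field_aut_over (adjoin K \<alpha>) \<tau>"
    and \<tau>ij: "\<tau> \<alpha>i = \<alpha>j"
    \<comment> \<open>F_lr and D in K[t_0..t_(n-1)] with
        psi_r(sum_l alpha^l t_l) = sum_l alpha^l F_lr / D  (cleared of denominators)\<close>
    and Fs_poly: "\<And>l r. l < n \<Longrightarrow> r < m \<Longrightarrow> polyfun K n (Fs l r)"
    and D_poly: "polyfun K n D"
    and D_nz: "\<exists>x\<in>aspace n. D x \<noteq> 0"
    and Fs_D: "\<And>r x. r < m \<Longrightarrow> x \<in> aspace n \<Longrightarrow>
        D x * poly (fst (\<psi> r)) (\<Sum>l<n. \<alpha> ^ l * x l)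
        = poly (snd (\<psi> r)) (\<Sum>l<n. \<alpha> ^ l * x l) * (\<Sum>l<n. \<alpha> ^ l * Fs l r x)"
    \<comment> \<open>phi is the standard parametrization of the hypercircle U\<close>
    and \<phi>_coeffs: "rvec_over (adjoin K \<alpha>) n \<phi>"
    and \<phi>_std: "u_fun \<alpha> n \<phi> = Fract [:0, 1:] 1"
    and \<phi>_hyper: "zcomponent n (zclos n (rimage n \<phi>)) (zclos n (hyper_open n m Fs D))"
  shows "map_ratfun \<tau> (u_fun \<alpha>i n \<phi>) = u_fun \<alpha>j n \<phi>"
proof -
  interpret field_hom \<tau>
    using \<tau> by (rule field_aut_over_field_hom)
  have "map_ratfun \<tau> (u_fun \<alpha>i n \<phi>) = u_fun (\<tau> \<alpha>i) n \<phi>"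
    using \<phi>_coeffs \<tau> unfolding field_aut_over_def by (intro map_ratfun_u_fun) auto
  then show ?thesis
    using \<tau>ij by simp
qed

end
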